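(* Let $\mathfrak A$ be a pseudo left Hilbert algebra. Then $\mathfrak A^2=\mathrm{span}\{\xi\eta:\xi,\eta\in\mathfrak A\}$, with the restricted product, involution and inner product, is a left Hilbert algebra. Moreover, for all $\xi\in\mathfrak A$ and $\eta\in(\mathfrak A^2)^\perp$ (orthogonal complement in $\overline{\mathfrak A}$) one has $\xi\eta:=\pi_l(\xi)\eta=0$; and if in addition $\eta\in\mathfrak A$, then also $\eta\xi=0$.
   Context: Inner products are linear in the second variable. A pseudo left Hilbert algebra is a complex associative algebra $\mathfrak A$ with an antilinear involution $S:\mathfrak A\to\mathfrak A$ ($S^2=\mathrm{id}$, $S(\xi\eta)=S(\eta)S(\xi)$) and an inner product $\langle\cdot,\cdot\rangle$ such that: (1) for each $\xi\in\mathfrak A$ the left multiplication $\pi_l(\xi):\eta\mapsto\xi\eta$ is bounded; (2) $\langle\xi\eta,\zeta\rangle=\langle\eta,(S\xi)\zeta\rangle$ for all $\xi,\eta,\zeta\in\mathfrak A$; (3) $S$ is closable as an operator on the Hilbert space completion $\overline{\mathfrak A}$. It is a left Hilbert algebra if moreover $\mathfrak A^2=\mathrm{span}\{\xi\eta:\xi,\eta\in\mathfrak A\}$ is dense in $\overline{\mathfrak A}$. The closure of $S$ is again denoted $S$, with domain $D(S)$; $\pi_l(\xi)$ also denotes the bounded extension to $\overline{\mathfrak A}$. *)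

theory Defs
  imports "HOL-Analysis.Analysis"
begin

text \<open>Completeness comes from the class banach.\<close>
definition complex_hilbert :: "(complex \<Rightarrow> 'h::banach \<Rightarrow> 'h) \<Rightarrow> ('h \<Rightarrow> 'h \<Rightarrow> complex) \<Rightarrow> bool" where
  "complex_hilbert sc ip \<longleftrightarrow>
     vector_space sc \<and>
     (\<forall>r x. sc (complex_of_real r) x = r *\<^sub>R x) \<and>
     (\<forall>x y z. ip x (y + z) = ip x y + ip x z) \<and>
     (\<forall>c x y. ip x (sc c y) = c * ip x y) \<and>
     (\<forall>x y. ip y x = cnj (ip x y)) \<and>
     (\<forall>x. ip x x = complex_of_real ((norm x)\<^sup>2))"

definition closable_on :: "'h::real_normed_vector set \<Rightarrow> ('h \<Rightarrow> 'h) \<Rightarrow> bool" where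
  "closable_on A S \<longleftrightarrow>
     (\<forall>x y z. (x, y) \<in> closure ((\<lambda>a. (a, S a)) ` A) \<and> (x, z) \<in> closure ((\<lambda>a. (a, S a)) ` A)
        \<longrightarrow> y = z)"

text \<open>A pseudo left Hilbert algebra: the algebra is the complex subspace A of the Hilbert
  space 'h; its Hilbert space completion is closure A (a closed subspace of 'h).
  The product mul and the involution S only matter on A.\<close>
definition pseudo_left_hilbert_algebra ::
  "(complex \<Rightarrow> 'h::banach \<Rightarrow> 'h) \<Rightarrow> ('h \<Rightarrow> 'h \<Rightarrow> complex) \<Rightarrow> ('h \<Rightarrow> 'h \<Rightarrow> 'h) \<Rightarrow> ('h \<Rightarrow> 'h) \<Rightarrow> 'h set \<Rightarrow> bool" where
  "pseudo_left_hilbert_algebra sc ip mul S A \<longleftrightarrow>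
     complex_hilbert sc ip \<and>
     module.subspace sc A \<and>
     \<comment> \<open>complex associative algebra structure on A\<close>
     (\<forall>x\<in>A. \<forall>y\<in>A. mul x y \<in> A) \<and>
     (\<forall>x\<in>A. \<forall>y\<in>A. \<forall>z\<in>A. mul (mul x y) z = mul x (mul y z)) \<and>
     (\<forall>x\<in>A. \<forall>y\<in>A. \<forall>z\<in>A. mul (x + y) z = mul x z + mul y z \<and> mul x (y + z) = mul x y + mul x z) \<and>
     (\<forall>c. \<forall>x\<in>A. \<forall>y\<in>A. mul (sc c x) y = sc c (mul x y) \<and> mul x (sc c y) = sc c (mul x y)) \<and>
     \<comment> \<open>antilinear involutive anti-multiplicative S on A\<close>
     (\<forall>x\<in>A. S x \<in> A \<and> S (S x) = x) \<and>
     (\<forall>x\<in>A. \<forall>y\<in>A. S (x + y) = S x + S y) \<and>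
     (\<forall>c. \<forall>x\<in>A. S (sc c x) = sc (cnj c) (S x)) \<and>
     (\<forall>x\<in>A. \<forall>y\<in>A. S (mul x y) = mul (S y) (S x)) \<and>
     \<comment> \<open>(1) left multiplications are bounded\<close>
     (\<forall>x\<in>A. \<exists>K. \<forall>y\<in>A. norm (mul x y) \<le> K * norm y) \<and>
     \<comment> \<open>(2)\<close>
     (\<forall>x\<in>A. \<forall>y\<in>A. \<forall>z\<in>A. ip (mul x y) z = ip y (mul (S x) z)) \<and>
     \<comment> \<open>(3) S closable\<close>
     closable_on A S"

definition alg_square :: "(complex \<Rightarrow> 'h::banach \<Rightarrow> 'h) \<Rightarrow> ('h \<Rightarrow> 'h \<Rightarrow> 'h) \<Rightarrow> 'h set \<Rightarrow> 'h set" where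
  "alg_square sc mul A = module.span sc {mul x y | x y. x \<in> A \<and> y \<in> A}"

definition left_hilbert_algebra ::
  "(complex \<Rightarrow> 'h::banach \<Rightarrow> 'h) \<Rightarrow> ('h \<Rightarrow> 'h \<Rightarrow> complex) \<Rightarrow> ('h \<Rightarrow> 'h \<Rightarrow> 'h) \<Rightarrow> ('h \<Rightarrow> 'h) \<Rightarrow> 'h set \<Rightarrow> bool" where
  "left_hilbert_algebra sc ip mul S A \<longleftrightarrow>
     pseudo_left_hilbert_algebra sc ip mul S A \<and> closure A \<subseteq> closure (alg_square sc mul A)"

text \<open>The bounded extension pi_l(x) of left multiplication by x to the completion closure A,
  evaluated at eta: the common limit of x s_n for sequences s_n in A converging to eta.\<close>
definition left_mult_ext :: "('h::real_normed_vector \<Rightarrow> 'h \<Rightarrow> 'h) \<Rightarrow> 'h set \<Rightarrow> 'h \<Rightarrow> 'h \<Rightarrow> 'h" where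
  "left_mult_ext mul A x eta =
     (THE z. \<forall>s. (\<forall>n. s n \<in> A) \<and> s \<longlonglongrightarrow> eta \<longrightarrow> (\<lambda>n. mul x (s n)) \<longlonglongrightarrow> z)"

end

theory Submission
  imports Defs
begin

text \<open>For \<xi> in A and \<eta> orthogonal to A^2, the vector S(\<xi>) \<xi> s lies in A^2, so
  ||\<xi> s||^2 = <s, S(\<xi>) \<xi> s> = <s - \<eta>, S(\<xi>) \<xi> s> is at most a constant times ||s - \<eta>|| ||s||;
  letting s tend to \<eta> gives \<pi>_l(\<xi>) \<eta> = 0. If moreover \<eta> is in A, then
  ||\<eta> \<xi>||^2 = <\<xi>, (S(\<eta>) \<eta>) \<xi>> = 0.

  For the density of (A^2)^2 in A^2, project d in A onto the closure of A^2: the remainder is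
  orthogonal to A^2, hence annihilated by left multiplication, so \<xi> d is a limit of products
  \<xi> e with e in A^2. Applied to \<xi> (c d) = (\<xi> c) d with \<xi> c in A^2, this puts \<xi> e into the
  closure of (A^2)^2 for all e in A^2; applied once more, it puts every generator \<xi> d of A^2
  there as well.\<close>

lemma closable_on_subset: "closable_on A S \<Longrightarrow> B \<subseteq> A \<Longrightarrow> closable_on B S"
  unfolding closable_on_def by (meson closure_mono image_mono subsetD)

lemma left_mult_ext_eqI:
  fixes mul :: "'h::real_normed_vector \<Rightarrow> 'h \<Rightarrow> 'h"
  assumes "\<eta> \<in> closure A"
    and lim: "\<And>s. \<forall>n. s n \<in> A \<Longrightarrow> s \<longlonglongrightarrow> \<eta> \<Longrightarrow> (\<lambda>n. mul x (s n)) \<longlonglongrightarrow> z"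
  shows "left_mult_ext mul A x \<eta> = z"
  unfolding left_mult_ext_def
proof (rule the_equality)
  show "\<forall>s. (\<forall>n. s n \<in> A) \<and> s \<longlonglongrightarrow> \<eta> \<longrightarrow> (\<lambda>n. mul x (s n)) \<longlonglongrightarrow> z"
    using lim by blast
next
  fix z' assume lim': "\<forall>s. (\<forall>n. s n \<in> A) \<and> s \<longlonglongrightarrow> \<eta> \<longrightarrow> (\<lambda>n. mul x (s n)) \<longlonglongrightarrow> z'"
  obtain s where "\<forall>n. s n \<in> A" "s \<longlonglongrightarrow> \<eta>"
    using \<open>\<eta> \<in> closure A\<close> closure_sequential by blast
  then show "z' = z"
    using lim lim' LIMSEQ_unique by blast
qed

locale complex_hilbert_space =
  fixes sc :: "complex \<Rightarrow> 'h::banach \<Rightarrow> 'h" and ip :: "'h \<Rightarrow> 'h \<Rightarrow> complex"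
  assumes complex_hilbert: "complex_hilbert sc ip"
begin

sublocale V: vector_space sc
  using complex_hilbert unfolding complex_hilbert_def by blast

lemma sc_of_real: "sc (complex_of_real r) x = r *\<^sub>R x"
  and ip_add_right: "ip x (y + z) = ip x y + ip x z"
  and ip_sc_right: "ip x (sc c y) = c * ip x y"
  and ip_commute: "ip y x = cnj (ip x y)"
  and ip_self: "ip x x = complex_of_real ((norm x)\<^sup>2)"
  using complex_hilbert unfolding complex_hilbert_def by blast+

lemma ip_add_left: "ip (x + y) z = ip x z + ip y z"
  by (metis ip_commute ip_add_right complex_cnj_add)

lemma ip_sc_left: "ip (sc c x) y = cnj c * ip x y"
  by (metis ip_commute ip_sc_right complex_cnj_mult)

lemma ip_scaleR_left: "ip (r *\<^sub>R x) y = r * ip x y"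
  using ip_sc_left[of "complex_of_real r"] by (simp add: sc_of_real)

lemma ip_scaleR_right: "ip x (r *\<^sub>R y) = r * ip x y"
  using ip_sc_right[of x "complex_of_real r"] by (simp add: sc_of_real)

lemma ip_minus_left: "ip (- x) y = - ip x y"
  using ip_scaleR_left[of "-1"] by simp

lemma ip_minus_right: "ip x (- y) = - ip x y"
  using ip_scaleR_right[of x "-1"] by simp

lemma ip_diff_left: "ip (x - y) z = ip x z - ip y z"
  using ip_add_left[of x "- y"] by (simp add: ip_minus_left)

lemma ip_zero_left [simp]: "ip 0 x = 0"
  using ip_scaleR_left[of 0] by simp

lemma ip_zero_right [simp]: "ip x 0 = 0"
  using ip_scaleR_right[of x 0] by simp

lemma norm_sc: "norm (sc c x) = cmod c * norm x"
proof -
  have "complex_of_real ((norm (sc c x))\<^sup>2) = ip (sc c x) (sc c x)"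
    by (simp only: ip_self)
  also have "\<dots> = cnj c * c * ip x x"
    by (simp add: ip_sc_left ip_sc_right)
  also have "\<dots> = complex_of_real ((cmod c * norm x)\<^sup>2)"
    using complex_norm_square[of c] by (simp add: ip_self power_mult_distrib mult.commute)
  finally have "(norm (sc c x))\<^sup>2 = (cmod c * norm x)\<^sup>2"
    by (simp only: of_real_eq_iff)
  then show ?thesis
    by simp
qed

lemma norm_add_square: "(norm ((x::'h) + y))\<^sup>2 = (norm x)\<^sup>2 + (norm y)\<^sup>2 + 2 * Re (ip x y)"
proof -
  have "complex_of_real ((norm (x + y))\<^sup>2) = ip (x + y) (x + y)"
    by (simp only: ip_self)
  also have "\<dots> = ip x x + ip y y + (ip x y + cnj (ip x y))"
    by (simp add: ip_add_left ip_add_right ip_commute[of x y])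
  finally have "(norm (x + y))\<^sup>2 = Re (ip x x + ip y y + (ip x y + cnj (ip x y)))"
    by (metis Re_complex_of_real)
  then show ?thesis
    by (simp add: ip_self)
qed

lemma parallelogram_law: "(norm ((x::'h) + y))\<^sup>2 + (norm (x - y))\<^sup>2 = 2 * (norm x)\<^sup>2 + 2 * (norm y)\<^sup>2"
  using norm_add_square[of x y] norm_add_square[of x "- y"] by (simp add: ip_minus_right)

lemma Re_ip_le: "Re (ip x y) \<le> norm x * norm (y::'h)"
proof (cases "norm x * norm y = 0")
  case True
  then show ?thesis
    by auto
next
  case False
  then have pos: "norm x * norm y > 0"
    by (simp add: less_le)
  define P where "P = norm x * norm y"
  have "Re (ip (norm y *\<^sub>R x) (- (norm x *\<^sub>R y))) = - P * Re (ip x y)"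
    by (simp add: P_def ip_minus_right ip_scaleR_left ip_scaleR_right)
  then have "(norm (norm y *\<^sub>R x - norm x *\<^sub>R y))\<^sup>2 = 2 * P * (P - Re (ip x y))"
    using norm_add_square[of "norm y *\<^sub>R x" "- (norm x *\<^sub>R y)"]
    by (simp add: P_def power2_eq_square right_diff_distrib)
  then have "0 \<le> 2 * P * (P - Re (ip x y))"
    by (metis zero_le_power2)
  then show ?thesis
    using pos by (simp add: P_def zero_le_mult_iff)
qed

lemma tendsto_sc:
  assumes "X \<longlonglongrightarrow> x"
  shows "(\<lambda>n. sc c (X n)) \<longlonglongrightarrow> sc c x"
proof -
  have "(\<lambda>n. norm (X n - x)) \<longlonglongrightarrow> 0"
    using assms by (simp add: LIM_zero tendsto_norm_zero)
  then have "(\<lambda>n. cmod c * norm (X n - x)) \<longlonglongrightarrow> 0"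
    by (rule tendsto_mult_right_zero)
  then have "(\<lambda>n. norm (sc c (X n) - sc c x)) \<longlonglongrightarrow> 0"
    by (simp add: V.scale_right_diff_distrib[symmetric] norm_sc)
  then have "(\<lambda>n. sc c (X n) - sc c x) \<longlonglongrightarrow> 0"
    by (rule tendsto_norm_zero_cancel)
  then show ?thesis
    by (rule LIM_zero_cancel)
qed

lemma subspace_closure:
  assumes M: "V.subspace M"
  shows "V.subspace (closure M)"
proof (rule V.subspaceI)
  show "0 \<in> closure M"
    using V.subspace_0[OF M] closure_subset by blast
next
  fix x y assume "x \<in> closure M" "y \<in> closure M"
  then obtain X Y where "\<forall>n. X n \<in> M" "X \<longlonglongrightarrow> x" "\<forall>n. Y n \<in> M" "Y \<longlonglongrightarrow> y"
    by (meson closure_sequential)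
  moreover have "(\<lambda>n. X n + Y n) \<longlonglongrightarrow> x + y"
    using \<open>X \<longlonglongrightarrow> x\<close> \<open>Y \<longlonglongrightarrow> y\<close> by (rule tendsto_add)
  moreover have "\<forall>n. X n + Y n \<in> M"
    using \<open>\<forall>n. X n \<in> M\<close> \<open>\<forall>n. Y n \<in> M\<close> by (simp add: V.subspace_add[OF M])
  ultimately show "x + y \<in> closure M"
    by (meson closure_sequential)
next
  fix c x assume "x \<in> closure M"
  then obtain X where "\<forall>n. X n \<in> M" "X \<longlonglongrightarrow> x"
    by (meson closure_sequential)
  moreover have "(\<lambda>n. sc c (X n)) \<longlonglongrightarrow> sc c x"
    using \<open>X \<longlonglongrightarrow> x\<close> by (rule tendsto_sc)
  moreover have "\<forall>n. sc c (X n) \<in> M"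
    using \<open>\<forall>n. X n \<in> M\<close> by (simp add: V.subspace_scale[OF M])
  ultimately show "sc c x \<in> closure M"
    by (meson closure_sequential)
qed

lemma orthogonal_if_minimal_distance:
  assumes min: "\<And>t. norm r \<le> norm (r - sc t z)"
  shows "ip z r = 0"
proof (rule ccontr)
  define w where "w = ip z r"
  assume "ip z r \<noteq> 0"
  then have w_pos: "(cmod w)\<^sup>2 > 0"
    by (simp add: w_def)
  define \<epsilon> where "\<epsilon> = 1 / ((norm z)\<^sup>2 + 1)"
  have "(norm z)\<^sup>2 + 1 > 0"
    by (simp add: add_nonneg_pos)
  then have \<epsilon>_pos: "\<epsilon> > 0" and \<epsilon>_small: "\<epsilon> * (norm z)\<^sup>2 < 1"
    by (simp_all add: \<epsilon>_def divide_less_eq)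
  \<comment> \<open>moving from r in the direction of w z decreases the norm to first order\<close>
  define t where "t = complex_of_real \<epsilon> * w"
  have "ip r (- sc t z) = - (complex_of_real \<epsilon> * (w * cnj w))"
    by (simp add: ip_minus_right ip_sc_right ip_commute[of z r] t_def w_def mult.assoc)
  also have "w * cnj w = complex_of_real ((cmod w)\<^sup>2)"
    by (rule complex_norm_square[symmetric])
  finally have "Re (ip r (- sc t z)) = - \<epsilon> * (cmod w)\<^sup>2"
    by simp
  moreover have "norm (sc t z) = \<epsilon> * cmod w * norm z"
    using \<epsilon>_pos by (simp add: norm_sc t_def norm_mult)
  ultimately have "(norm (r - sc t z))\<^sup>2 = (norm r)\<^sup>2 + (\<epsilon> * cmod w * norm z)\<^sup>2 - 2 * \<epsilon> * (cmod w)\<^sup>2"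
    using norm_add_square[of r "- sc t z"] by simp
  moreover have "(norm r)\<^sup>2 \<le> (norm (r - sc t z))\<^sup>2"
    using min[of t] by (simp add: power_mono)
  ultimately have "2 * \<epsilon> * (cmod w)\<^sup>2 \<le> (\<epsilon> * cmod w * norm z)\<^sup>2"
    by linarith
  then have "\<epsilon> * (cmod w)\<^sup>2 * 2 \<le> \<epsilon> * (cmod w)\<^sup>2 * (\<epsilon> * (norm z)\<^sup>2)"
    by (simp add: power2_eq_square algebra_simps)
  then have "2 \<le> \<epsilon> * (norm z)\<^sup>2"
    using \<epsilon>_pos w_pos by (simp add: mult_le_cancel_left_pos)
  with \<epsilon>_small show False
    by simp
qed

lemma Cauchy_if_minimizing:
  assumes M: "V.subspace M"
    and dist_ge: "\<And>m. m \<in> M \<Longrightarrow> \<delta> \<le> norm (d - m)"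
    and e_in: "\<And>n. e n \<in> M"
    and lim: "(\<lambda>n. norm (d - e n)) \<longlonglongrightarrow> \<delta>"
  shows "Cauchy e"
proof -
  define f where "f n = (norm (d - e n))\<^sup>2 - \<delta>\<^sup>2" for n
  have "\<delta> \<ge> 0"
    using lim by (rule LIMSEQ_le_const) simp
  have bound: "(norm (e m - e n))\<^sup>2 \<le> 2 * f m + 2 * f n" for m n
  proof -
    \<comment> \<open>the midpoint of e m and e n lies in M, so the parallelogram law applies\<close>
    have "sc (complex_of_real (1/2)) (e m + e n) \<in> M"
      by (intro V.subspace_scale[OF M] V.subspace_add[OF M] e_in)
    then have "\<delta> \<le> norm (d - (1/2) *\<^sub>R (e m + e n))"
      by (simp add: dist_ge flip: sc_of_real)
    moreover have "(d - e m) + (d - e n) = 2 *\<^sub>R (d - (1/2) *\<^sub>R (e m + e n))"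
      by (simp add: algebra_simps scaleR_2)
    ultimately have "2 * \<delta> \<le> norm ((d - e m) + (d - e n))"
      by simp
    then have "(2 * \<delta>)\<^sup>2 \<le> (norm ((d - e m) + (d - e n)))\<^sup>2"
      using \<open>\<delta> \<ge> 0\<close> by (intro power_mono) auto
    then show ?thesis
      using parallelogram_law[of "d - e m" "d - e n"]
      by (simp add: f_def norm_minus_commute power_mult_distrib)
  qed
  have f_lim: "f \<longlonglongrightarrow> 0"
    unfolding f_def using tendsto_diff[OF tendsto_power[OF lim, of 2] tendsto_const[of "\<delta>\<^sup>2"]]
    by simp
  show ?thesis
  proof (rule CauchyI)
    fix \<epsilon> :: real
    assume "\<epsilon> > 0"
    then obtain N where N: "\<And>n. n \<ge> N \<Longrightarrow> norm (f n) < \<epsilon>\<^sup>2 / 4"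
      using f_lim by (metis LIMSEQ_iff diff_zero divide_pos_pos zero_less_numeral zero_less_power)
    have "norm (e m - e n) < \<epsilon>" if "m \<ge> N" "n \<ge> N" for m n
    proof -
      have "(norm (e m - e n))\<^sup>2 < \<epsilon>\<^sup>2"
        using bound[of m n] N[OF \<open>m \<ge> N\<close>] N[OF \<open>n \<ge> N\<close>] by simp
      then show ?thesis
        using \<open>\<epsilon> > 0\<close> by (simp add: power_less_imp_less_base)
    qed
    then show "\<exists>N. \<forall>m\<ge>N. \<forall>n\<ge>N. norm (e m - e n) < \<epsilon>"
      by blast
  qed
qed

lemma orthogonal_projection_exists:
  assumes M: "V.subspace M"
  shows "\<exists>p\<in>closure M. \<forall>z\<in>M. ip z (d - p) = 0"
proof -
  define \<delta> where "\<delta> = (INF m\<in>M. norm (d - m))"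
  have bdd: "bdd_below ((\<lambda>m. norm (d - m)) ` M)"
    by (auto intro: bdd_belowI2[of _ 0])
  have dist_ge: "\<delta> \<le> norm (d - m)" if "m \<in> M" for m
    unfolding \<delta>_def using bdd that by (rule cINF_lower)
  have "M \<noteq> {}"
    using V.subspace_0[OF M] by blast
  then have "\<exists>m\<in>M. norm (d - m) < \<delta> + 1 / Suc n" for n
    unfolding \<delta>_def using bdd by (subst cINF_less_iff[symmetric]) auto
  then obtain e where e_in: "\<And>n. e n \<in> M" and e_close: "\<And>n. norm (d - e n) < \<delta> + 1 / Suc n"
    by metis
  have lim: "(\<lambda>n. norm (d - e n)) \<longlonglongrightarrow> \<delta>"
  proof (rule tendsto_sandwich[of "\<lambda>n. \<delta>" _ _ "\<lambda>n. \<delta> + 1 / Suc n"])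
    show "(\<lambda>n. \<delta> + 1 / Suc n) \<longlonglongrightarrow> \<delta>"
      using tendsto_add[OF tendsto_const[of \<delta>] LIMSEQ_Suc[OF lim_inverse_n']] by simp
    show "\<forall>\<^sub>F n in sequentially. norm (d - e n) \<le> \<delta> + 1 / Suc n"
      using e_close by (intro always_eventually allI less_imp_le)
  qed (use dist_ge e_in in auto)
  obtain p where ep: "e \<longlonglongrightarrow> p"
    using Cauchy_if_minimizing[OF M dist_ge e_in lim] Cauchy_convergent_iff convergent_def by blast
  then have p_in: "p \<in> closure M"
    using e_in closure_sequential by blast
  have "(\<lambda>n. norm (d - e n)) \<longlonglongrightarrow> norm (d - p)"
    using ep by (intro tendsto_intros)
  with lim have "norm (d - p) = \<delta>"
    by (rule LIMSEQ_unique[symmetric])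
  have "closed {q. \<delta> \<le> norm (d - q)}"
    by (intro closed_Collect_le continuous_intros)
  then have "closure M \<subseteq> {q. \<delta> \<le> norm (d - q)}"
    using dist_ge by (intro closure_minimal) auto
  then have "norm (d - p) \<le> norm (d - p - sc t z)" if "z \<in> M" for z t
    using V.subspace_add[OF subspace_closure[OF M] p_in, of "sc t z"] closure_subset
      V.subspace_scale[OF M that] \<open>norm (d - p) = \<delta>\<close> by (auto simp: diff_diff_eq)
  then show ?thesis
    using p_in orthogonal_if_minimal_distance by blast
qed

lemma subspace_alg_square: "V.subspace (alg_square sc mul A)"
  by (simp add: alg_square_def)

lemma mul_mem_alg_square: "x \<in> A \<Longrightarrow> y \<in> A \<Longrightarrow> mul x y \<in> alg_square sc mul A"
  unfolding alg_square_def by (rule V.span_base) blast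

lemma alg_square_induct [consumes 1, case_names zero step]:
  assumes "x \<in> alg_square sc mul A"
    and "P 0" "\<And>k a b y. a \<in> A \<Longrightarrow> b \<in> A \<Longrightarrow> P y \<Longrightarrow> P (sc k (mul a b) + y)"
  shows "P x"
  using assms(1) unfolding alg_square_def
  by (induction rule: V.span_induct_alt) (auto intro: assms(2,3))

lemma alg_square_minimal:
  "V.subspace T \<Longrightarrow> (\<And>x y. x \<in> A \<Longrightarrow> y \<in> A \<Longrightarrow> mul x y \<in> T) \<Longrightarrow> alg_square sc mul A \<subseteq> T"
  unfolding alg_square_def by (rule V.span_minimal) auto

end

locale pseudo_left_hilbert = complex_hilbert_space sc ip
  for sc :: "complex \<Rightarrow> 'h::banach \<Rightarrow> 'h" and ip :: "'h \<Rightarrow> 'h \<Rightarrow> complex" +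
  fixes mul :: "'h \<Rightarrow> 'h \<Rightarrow> 'h" and S :: "'h \<Rightarrow> 'h" and A :: "'h set"
  assumes pseudo_left_hilbert_algebra: "pseudo_left_hilbert_algebra sc ip mul S A"
begin

abbreviation A2 :: "'h set" where "A2 \<equiv> alg_square sc mul A"

lemma subspace_A: "V.subspace A"
  and mul_closed: "x \<in> A \<Longrightarrow> y \<in> A \<Longrightarrow> mul x y \<in> A"
  and mul_assoc: "x \<in> A \<Longrightarrow> y \<in> A \<Longrightarrow> z \<in> A \<Longrightarrow> mul (mul x y) z = mul x (mul y z)"
  and mul_add_left: "x \<in> A \<Longrightarrow> y \<in> A \<Longrightarrow> z \<in> A \<Longrightarrow> mul (x + y) z = mul x z + mul y z"
  and mul_add_right: "x \<in> A \<Longrightarrow> y \<in> A \<Longrightarrow> z \<in> A \<Longrightarrow> mul x (y + z) = mul x y + mul x z"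
  and mul_sc_left: "x \<in> A \<Longrightarrow> y \<in> A \<Longrightarrow> mul (sc c x) y = sc c (mul x y)"
  and mul_sc_right: "x \<in> A \<Longrightarrow> y \<in> A \<Longrightarrow> mul x (sc c y) = sc c (mul x y)"
  and S_closed: "x \<in> A \<Longrightarrow> S x \<in> A"
  and S_S: "x \<in> A \<Longrightarrow> S (S x) = x"
  and S_add: "x \<in> A \<Longrightarrow> y \<in> A \<Longrightarrow> S (x + y) = S x + S y"
  and S_sc: "x \<in> A \<Longrightarrow> S (sc c x) = sc (cnj c) (S x)"
  and S_mul: "x \<in> A \<Longrightarrow> y \<in> A \<Longrightarrow> S (mul x y) = mul (S y) (S x)"
  and ip_mul_left: "x \<in> A \<Longrightarrow> y \<in> A \<Longrightarrow> z \<in> A \<Longrightarrow> ip (mul x y) z = ip y (mul (S x) z)"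
  and closable: "closable_on A S"
  using pseudo_left_hilbert_algebra unfolding pseudo_left_hilbert_algebra_def by auto

lemma mul_bounded: "x \<in> A \<Longrightarrow> \<exists>K\<ge>0. \<forall>y\<in>A. norm (mul x y) \<le> K * norm y"
proof -
  assume "x \<in> A"
  then obtain K where "\<forall>y\<in>A. norm (mul x y) \<le> K * norm y"
    using pseudo_left_hilbert_algebra unfolding pseudo_left_hilbert_algebra_def by auto
  then have "\<forall>y\<in>A. norm (mul x y) \<le> max K 0 * norm y"
    by (meson max.cobounded1 mult_right_mono norm_ge_zero order.trans)
  then show ?thesis
    by (intro exI[of _ "max K 0"]) auto
qed

lemma pseudo_left_hilbert_algebra_subalgebra:
  assumes B: "V.subspace B" "B \<subseteq> A"
    and closed: "\<And>x y. x \<in> B \<Longrightarrow> y \<in> B \<Longrightarrow> mul x y \<in> B" "\<And>x. x \<in> B \<Longrightarrow> S x \<in> B"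
  shows "pseudo_left_hilbert_algebra sc ip mul S B"
  unfolding pseudo_left_hilbert_algebra_def
proof (intro conjI ballI allI complex_hilbert B(1) closable_on_subset[OF closable B(2)] closed)
  fix x assume "x \<in> B"
  then show "\<exists>K. \<forall>y\<in>B. norm (mul x y) \<le> K * norm y"
    using mul_bounded B(2) by blast
qed (use B(2) in \<open>auto intro: mul_assoc mul_add_left mul_add_right mul_sc_left mul_sc_right
  S_S S_add S_sc S_mul ip_mul_left\<close>)

lemma mul_zero_left: "y \<in> A \<Longrightarrow> mul 0 y = 0"
  using mul_add_left[of 0 0 y] V.subspace_0[OF subspace_A] by simp

lemma mul_zero_right: "x \<in> A \<Longrightarrow> mul x 0 = 0"
  using mul_add_right[of x 0 0] V.subspace_0[OF subspace_A] by simp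

lemma mul_diff_right: "x \<in> A \<Longrightarrow> y \<in> A \<Longrightarrow> z \<in> A \<Longrightarrow> mul x (y - z) = mul x y - mul x z"
  using mul_add_right[of x "y - z" z] V.subspace_diff[OF subspace_A] by (simp add: eq_diff_eq)

lemma alg_square_subset_self: "A2 \<subseteq> A"
  using alg_square_minimal subspace_A mul_closed by blast

lemma norm_mul_square_le:
  assumes x: "x \<in> A" and orth: "\<forall>\<zeta>\<in>A2. ip \<zeta> \<eta> = 0"
  shows "\<exists>K. \<forall>s\<in>A. (norm (mul x s))\<^sup>2 \<le> K * (norm (s - \<eta>) * norm s)"
proof -
  obtain K1 where K1: "\<forall>y\<in>A. norm (mul x y) \<le> K1 * norm y"
    using mul_bounded[OF x] by blast
  obtain K2 where "K2 \<ge> 0" and K2: "\<forall>y\<in>A. norm (mul (S x) y) \<le> K2 * norm y"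
    using mul_bounded[OF S_closed[OF x]] by blast
  have "(norm (mul x s))\<^sup>2 \<le> K2 * K1 * (norm (s - \<eta>) * norm s)" if s: "s \<in> A" for s
  proof -
    define w where "w = mul (S x) (mul x s)"
    have "w \<in> A2"
      unfolding w_def using x s by (intro mul_mem_alg_square S_closed mul_closed)
    then have "ip \<eta> w = 0"
      using orth ip_commute[of w \<eta>] by simp
    have "(norm (mul x s))\<^sup>2 = Re (ip (mul x s) (mul x s))"
      by (simp add: ip_self)
    also have "\<dots> = Re (ip (s - \<eta>) w)"
      using ip_mul_left[OF x s mul_closed[OF x s]] \<open>ip \<eta> w = 0\<close> by (simp add: w_def ip_diff_left)
    also have "\<dots> \<le> norm (s - \<eta>) * norm w"
      by (rule Re_ip_le)
    also have "norm w \<le> K2 * (K1 * norm s)"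
      unfolding w_def using K1 K2 x s \<open>K2 \<ge> 0\<close>
      by (meson mul_closed mult_left_mono order.trans)
    finally show ?thesis
      by (simp add: mult_left_mono mult.assoc mult.left_commute)
  qed
  then show ?thesis
    by blast
qed

lemma tendsto_mul_zero_if_orthogonal:
  assumes x: "x \<in> A" and orth: "\<forall>\<zeta>\<in>A2. ip \<zeta> \<eta> = 0"
    and s_in: "\<forall>n. s n \<in> A" and s_lim: "s \<longlonglongrightarrow> \<eta>"
  shows "(\<lambda>n. mul x (s n)) \<longlonglongrightarrow> 0"
proof -
  obtain K where K: "\<forall>s\<in>A. (norm (mul x s))\<^sup>2 \<le> K * (norm (s - \<eta>) * norm s)"
    using norm_mul_square_le[OF x orth] by blast
  have "(\<lambda>n. norm (s n - \<eta>)) \<longlonglongrightarrow> 0"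
    using s_lim by (simp add: LIM_zero tendsto_norm_zero)
  then have "(\<lambda>n. norm (s n - \<eta>) * norm (s n)) \<longlonglongrightarrow> 0 * norm \<eta>"
    using s_lim by (intro tendsto_mult tendsto_norm)
  then have "(\<lambda>n. K * (norm (s n - \<eta>) * norm (s n))) \<longlonglongrightarrow> 0"
    by (simp add: tendsto_mult_right_zero)
  moreover have "\<forall>\<^sub>F n in sequentially. norm ((norm (mul x (s n)))\<^sup>2) \<le> K * (norm (s n - \<eta>) * norm (s n))"
    using K s_in by (intro always_eventually) simp
  ultimately have "(\<lambda>n. (norm (mul x (s n)))\<^sup>2) \<longlonglongrightarrow> 0"
    by (rule Lim_null_comparison[rotated])
  then have "(\<lambda>n. sqrt ((norm (mul x (s n)))\<^sup>2)) \<longlonglongrightarrow> sqrt 0"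
    by (rule tendsto_real_sqrt)
  then have "(\<lambda>n. norm (mul x (s n))) \<longlonglongrightarrow> 0"
    by simp
  then show ?thesis
    by (rule tendsto_norm_zero_cancel)
qed

lemma left_mult_ext_eq_zero_if_orthogonal:
  assumes "x \<in> A" "\<forall>\<zeta>\<in>A2. ip \<zeta> \<eta> = 0" "\<eta> \<in> closure A"
  shows "left_mult_ext mul A x \<eta> = 0"
  using assms by (intro left_mult_ext_eqI tendsto_mul_zero_if_orthogonal)

lemma mul_eq_zero_if_orthogonal:
  assumes x: "x \<in> A" and orth: "\<forall>\<zeta>\<in>A2. ip \<zeta> \<eta> = 0" and "\<eta> \<in> A"
  shows "mul x \<eta> = 0"
  using norm_mul_square_le[OF x orth] \<open>\<eta> \<in> A\<close> by fastforce

lemma mul_eq_zero_if_orthogonal_left: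
  assumes x: "x \<in> A" and orth: "\<forall>\<zeta>\<in>A2. ip \<zeta> \<eta> = 0" and \<eta>: "\<eta> \<in> A"
  shows "mul \<eta> x = 0"
proof -
  have "mul (S \<eta>) \<eta> = 0"
    using S_closed[OF \<eta>] orth \<eta> by (rule mul_eq_zero_if_orthogonal)
  have "complex_of_real ((norm (mul \<eta> x))\<^sup>2) = ip (mul \<eta> x) (mul \<eta> x)"
    by (simp only: ip_self)
  also have "\<dots> = ip x (mul (mul (S \<eta>) \<eta>) x)"
    using ip_mul_left[OF \<eta> x mul_closed[OF \<eta> x]] mul_assoc[OF S_closed[OF \<eta>] \<eta> x] by simp
  also have "\<dots> = 0"
    by (simp add: \<open>mul (S \<eta>) \<eta> = 0\<close> mul_zero_left[OF x])
  finally show ?thesis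
    by simp
qed

lemma mul_mem_closure_mul_image:
  assumes x: "x \<in> A" and d: "d \<in> A"
  shows "mul x d \<in> closure (mul x ` A2)"
proof -
  obtain p where "p \<in> closure A2" and orth: "\<forall>\<zeta>\<in>A2. ip \<zeta> (d - p) = 0"
    using orthogonal_projection_exists[OF subspace_alg_square] by blast
  then obtain e where e_in: "\<forall>n. e n \<in> A2" and "e \<longlonglongrightarrow> p"
    using closure_sequential by blast
  have "\<forall>n. d - e n \<in> A"
    using e_in alg_square_subset_self d V.subspace_diff[OF subspace_A] by blast
  moreover have "(\<lambda>n. d - e n) \<longlonglongrightarrow> d - p"
    using \<open>e \<longlonglongrightarrow> p\<close> by (rule tendsto_diff[OF tendsto_const])
  ultimately have "(\<lambda>n. mul x (d - e n)) \<longlonglongrightarrow> 0"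
    by (rule tendsto_mul_zero_if_orthogonal[OF x orth])
  then have "(\<lambda>n. mul x d - mul x (d - e n)) \<longlonglongrightarrow> mul x d - 0"
    by (rule tendsto_diff[OF tendsto_const])
  moreover have "mul x d - mul x (d - e n) = mul x (e n)" for n
  proof -
    have "e n \<in> A"
      using e_in alg_square_subset_self by blast
    then show ?thesis
      by (simp add: mul_diff_right[OF x d])
  qed
  ultimately have "(\<lambda>n. mul x (e n)) \<longlonglongrightarrow> mul x d"
    by simp
  then show ?thesis
    unfolding closure_sequential using e_in by (intro exI[of _ "\<lambda>n. mul x (e n)"]) auto
qed

lemma mul_mem_closure_alg_square_alg_square:
  assumes x: "x \<in> A" and e: "e \<in> A2"
  shows "mul x e \<in> closure (alg_square sc mul A2)"
proof -
  let ?A4 = "closure (alg_square sc mul A2)"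
  have A4: "V.subspace ?A4"
    by (intro subspace_closure subspace_alg_square)
  have mul_prod: "mul x (mul c d) \<in> ?A4" if c: "c \<in> A" and d: "d \<in> A" for c d
  proof -
    have "mul x (mul c d) = mul (mul x c) d"
      using mul_assoc[OF x c d] by simp
    also have "\<dots> \<in> closure (mul (mul x c) ` A2)"
      using mul_closed[OF x c] d by (rule mul_mem_closure_mul_image)
    also have "\<dots> \<subseteq> ?A4"
      using mul_mem_alg_square[OF mul_mem_alg_square[OF x c]] by (intro closure_mono) blast
    finally show ?thesis .
  qed
  have "e \<in> A \<and> mul x e \<in> ?A4"
    using e
  proof (induction rule: alg_square_induct)
    case zero
    show ?case
      using V.subspace_0[OF subspace_A] V.subspace_0[OF A4] mul_zero_right[OF x] by simp
  next
    case (step k a b y)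
    then show ?case
      using mul_prod[OF step(1,2)] mul_closed[OF step(1,2)] x
      by (simp add: V.subspace_add V.subspace_scale subspace_A A4 mul_add_right mul_sc_right)
  qed
  then show ?thesis
    by blast
qed

lemma alg_square_subset_closure_alg_square: "A2 \<subseteq> closure (alg_square sc mul A2)"
proof (rule alg_square_minimal)
  show "V.subspace (closure (alg_square sc mul A2))"
    by (intro subspace_closure subspace_alg_square)
  fix x y assume "x \<in> A" "y \<in> A"
  then have "mul x y \<in> closure (mul x ` A2)"
    by (rule mul_mem_closure_mul_image)
  also have "\<dots> \<subseteq> closure (alg_square sc mul A2)"
    using mul_mem_closure_alg_square_alg_square[OF \<open>x \<in> A\<close>]
    by (intro closure_minimal closed_closure) blast
  finally show "mul x y \<in> closure (alg_square sc mul A2)" .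
qed

lemma S_mem_alg_square:
  assumes "x \<in> A2"
  shows "S x \<in> A2"
proof -
  have "x \<in> A \<and> S x \<in> A2"
    using assms
  proof (induction rule: alg_square_induct)
    case zero
    have "S 0 = 0"
      using S_add[of 0 0] V.subspace_0[OF subspace_A] by simp
    then show ?case
      using V.subspace_0[OF subspace_A] V.subspace_0[OF subspace_alg_square] by simp
  next
    case (step k a b y)
    then have "S (mul a b) \<in> A2"
      using S_mul mul_mem_alg_square S_closed by simp
    then show ?case
      using step mul_closed[OF step(1,2)]
      by (simp add: S_add S_sc V.subspace_add V.subspace_scale subspace_A subspace_alg_square)
  qed
  then show ?thesis
    by blast
qed

lemma left_hilbert_algebra_alg_square: "left_hilbert_algebra sc ip mul S A2"
  unfolding left_hilbert_algebra_def
proof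
  show "pseudo_left_hilbert_algebra sc ip mul S A2"
    by (intro pseudo_left_hilbert_algebra_subalgebra subspace_alg_square alg_square_subset_self
        S_mem_alg_square mul_mem_alg_square) (use alg_square_subset_self in blast)+
  show "closure A2 \<subseteq> closure (alg_square sc mul A2)"
    using alg_square_subset_closure_alg_square closure_minimal by blast
qed

end

theorem mainTheorem1:
  fixes sc :: "complex \<Rightarrow> 'h::banach \<Rightarrow> 'h"
    and ip :: "'h \<Rightarrow> 'h \<Rightarrow> complex"
    and mul :: "'h \<Rightarrow> 'h \<Rightarrow> 'h"
    and S :: "'h \<Rightarrow> 'h"
    and A :: "'h set"
  assumes "pseudo_left_hilbert_algebra sc ip mul S A"
  shows "left_hilbert_algebra sc ip mul S (alg_square sc mul A) \<and>
    (\<forall>\<xi>\<in>A. \<forall>\<eta>\<in>closure A. (\<forall>\<zeta>\<in>alg_square sc mul A. ip \<zeta> \<eta> = 0) \<longrightarrow>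
        left_mult_ext mul A \<xi> \<eta> = 0 \<and> (\<eta> \<in> A \<longrightarrow> mul \<eta> \<xi> = 0))"
proof -
  interpret pseudo_left_hilbert sc ip mul S A
    using assms by unfold_locales (simp_all add: pseudo_left_hilbert_algebra_def)
  show ?thesis
    using left_hilbert_algebra_alg_square left_mult_ext_eq_zero_if_orthogonal
      mul_eq_zero_if_orthogonal_left by blast
qed

end
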